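(* Let $C=(C_1,\dots,C_m)$ be a quantum circuit with canonical form $G$, whose vertices are $G_1,\dots,G_m$ with $G_k$ corresponding to gate $C_k$. For any indices $1\le i<j\le m$, the following are equivalent: (1) $[i,j]_C=0$; (2) $G_j$ is not a successor of $G_i$ in $G$, i.e., there is no directed path from $G_i$ to $G_j$ in $G$.
   Context: A gate is a unitary operation acting on a specified ordered list of qubits; we identify it with the unitary it induces on the full $n$-qubit space. Two gates $A,B$ commute if their unitaries satisfy $[A,B]=AB-BA=0$. A circuit is a finite sequence of gates $(C_1,\dots,C_m)$ (applied left to right). A pairwise commutation move replaces two adjacent gates whose unitaries commute by the same two gates in swapped order. For indices $i,j$, we write $[i,j]_C=0$ if and only if $i=j$, or there is a finite sequence of pairwise commutation moves applied to $C$ after which the gate originally at position $j$ comes before the gate originally at position $i$ (for $i<j$; symmetrically for $j<i$). The canonical form of $C$ is the directed graph built as follows: start with the empty graph; for $t=1,\dots,m$: mark every vertex already in the graph as "reachable"; add vertex $G_t$; then for $s=t-1,t-2,\dots,1$ in this order, if $G_s$ is marked reachable and $[C_s,C_t]\neq 0$, add a directed edge $G_s\to G_t$ and mark every predecessor of $G_s$ (every vertex from which there is a directed path to $G_s$ in the current graph) as not reachable. *)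

theory Defs
  imports "Jordan_Normal_Form.Schur_Decomposition"
begin

(* A gate on n qubits, identified with the unitary it induces on the full
   2^n-dimensional space. *)
definition is_unitary_gate :: "nat \<Rightarrow> complex mat \<Rightarrow> bool" where
  "is_unitary_gate n U \<longleftrightarrow> U \<in> carrier_mat (2^n) (2^n) \<and> U * mat_adjoint U = 1\<^sub>m (2^n)"

(* A circuit: finite sequence of gates, 0-indexed positions *)
definition is_circuit :: "nat \<Rightarrow> complex mat list \<Rightarrow> bool" where
  "is_circuit n C \<longleftrightarrow> (\<forall>U\<in>set C. is_unitary_gate n U)"

definition commutes :: "complex mat \<Rightarrow> complex mat \<Rightarrow> bool" where
  "commutes A B \<longleftrightarrow> A * B = B * A"

(* An arrangement of the circuit is a list p of original positions; p ! k is the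
   original index of the gate currently at position k. *)
definition comm_move :: "complex mat list \<Rightarrow> nat list \<Rightarrow> nat list \<Rightarrow> bool" where
  "comm_move C p q \<longleftrightarrow> (\<exists>k. Suc k < length p \<and> commutes (C ! (p ! k)) (C ! (p ! Suc k))
      \<and> q = p[k := p ! Suc k, Suc k := p ! k])"

definition comm_zero :: "complex mat list \<Rightarrow> nat \<Rightarrow> nat \<Rightarrow> bool" where
  "comm_zero C i j \<longleftrightarrow> i = j \<or>
     (\<exists>p. (comm_move C)\<^sup>*\<^sup>* [0..<length C] p \<and>
        (if i < j then (\<exists>a b. a < b \<and> b < length p \<and> p ! a = j \<and> p ! b = i)
                  else (\<exists>a b. a < b \<and> b < length p \<and> p ! a = i \<and> p ! b = j)))"

(* Canonical form: vertex k corresponds to gate C ! k; the graph is its edge set.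
   One step of the inner loop for new vertex t at candidate s; state (E, R)
   with R the set of vertices currently marked reachable. *)
definition canon_step :: "complex mat list \<Rightarrow> nat \<Rightarrow> nat \<Rightarrow> (nat \<times> nat) set \<times> nat set
    \<Rightarrow> (nat \<times> nat) set \<times> nat set" where
  "canon_step C t s ER = (let (E, R) = ER in
     if s \<in> R \<and> \<not> commutes (C ! s) (C ! t)
     then (let E' = insert (s, t) E in (E', R - {u. (u, s) \<in> E'\<^sup>+}))
     else (E, R))"

definition canon_add :: "complex mat list \<Rightarrow> nat \<Rightarrow> (nat \<times> nat) set \<Rightarrow> (nat \<times> nat) set" where
  "canon_add C t E = fst (fold (canon_step C t) (rev [0..<t]) (E, {0..<t}))"

definition canon_edges :: "complex mat list \<Rightarrow> (nat \<times> nat) set" where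
  "canon_edges C = fold (canon_add C) [0..<length C] {}"

end

theory Submission
  imports Defs
begin

text \<open>Call gate \<open>y\<close> directly dependent on an earlier gate \<open>x\<close> when their unitaries do not
commute. The pruning by reachability marks in the construction of the canonical form only
omits edges \<open>s \<rightarrow> t\<close> for which \<open>s\<close> already reaches \<open>t\<close>, so the canonical form has the same
transitive closure as direct dependence. A commutation move never swaps a dependent pair,
hence every arrangement reachable by moves keeps all dependency chains in order. Conversely,
if \<open>j\<close> does not depend on \<open>i\<close>, the gates of \<open>i..j\<close> that depend on \<open>i\<close> commute with every later
gate of that block which does not, so they can all be shifted behind these, \<open>j\<close> included.\<close>

definition dependency_edges :: "complex mat list \<Rightarrow> (nat \<times> nat) set" where
  "dependency_edges C = {(x, y). x < y \<and> y < length C \<and> \<not> commutes (C ! x) (C ! y)}"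

lemma canon_step_eq:
  "canon_step C t s (E, R) =
     (if s \<in> R \<and> \<not> commutes (C ! s) (C ! t)
      then (insert (s, t) E, R - {u. (u, s) \<in> (insert (s, t) E)\<^sup>+}) else (E, R))"
  by (simp add: canon_step_def Let_def)

lemma canon_step_mono: "fst ER \<subseteq> fst (canon_step C t s ER)"
  by (cases ER) (auto simp: canon_step_eq)

lemma canon_step_subset:
  "fst (canon_step C t s ER) \<subseteq> fst ER \<union> (if commutes (C ! s) (C ! t) then {} else {(s, t)})"
  by (cases ER) (auto simp: canon_step_eq)

lemma fold_canon_step_mono: "fst ER \<subseteq> fst (fold (canon_step C t) ss ER)"
proof (induction ss arbitrary: ER)
  case (Cons s ss)
  then show ?case
    using canon_step_mono[of ER C t s] by (metis fold_Cons comp_apply order_trans)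
qed simp

lemma fold_canon_step_subset:
  "fst (fold (canon_step C t) ss ER)
     \<subseteq> fst ER \<union> {(s, t) |s. s \<in> set ss \<and> \<not> commutes (C ! s) (C ! t)}"
proof (induction ss arbitrary: ER)
  case (Cons s ss)
  then show ?case
    using canon_step_subset[of C t s ER] by (fastforce split: if_splits)
qed simp

text \<open>Invariant of the inner loop: every vertex unmarked so far already reaches \<open>t\<close>.\<close>

lemma fold_canon_step_reaches:
  assumes "\<forall>s \<in> set ss - R. (s, t) \<in> E\<^sup>+"
    and "s \<in> set ss" and "\<not> commutes (C ! s) (C ! t)"
  shows "(s, t) \<in> (fst (fold (canon_step C t) ss (E, R)))\<^sup>+"
  using assms
proof (induction ss arbitrary: E R)
  case Nil
  then show ?case by simp
next
  case (Cons x ss)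
  have final_mono: "E'\<^sup>+ \<subseteq> (fst (fold (canon_step C t) ss (E', R')))\<^sup>+" for E' R'
    using fold_canon_step_mono[of "(E', R')"] by (intro trancl_mono_subset) simp
  show ?case
  proof (cases "x \<in> R \<and> \<not> commutes (C ! x) (C ! t)")
    case True
    define E' where "E' = insert (x, t) E"
    define R' where "R' = R - {u. (u, x) \<in> E'\<^sup>+}"
    have step: "canon_step C t x (E, R) = (E', R')"
      using True by (simp add: canon_step_eq E'_def R'_def)
    have "E\<^sup>+ \<subseteq> E'\<^sup>+"
      unfolding E'_def by (intro trancl_mono_subset) auto
    moreover have "(x, t) \<in> E'\<^sup>+"
      by (simp add: E'_def r_into_trancl')
    ultimately have "\<forall>u \<in> set ss - R'. (u, t) \<in> E'\<^sup>+"
      using Cons.prems(1) by (auto simp: R'_def intro: trancl_trans)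
    then show ?thesis
      using Cons.IH[where E = E' and R = R'] Cons.prems(2,3) step final_mono \<open>(x, t) \<in> E'\<^sup>+\<close>
      by auto
  next
    case False
    then have "canon_step C t x (E, R) = (E, R)"
      by (auto simp: canon_step_eq)
    then show ?thesis
      using Cons.IH[where E = E and R = R] Cons.prems False final_mono by auto
  qed
qed

lemma canon_add_mono: "E \<subseteq> canon_add C t E"
  unfolding canon_add_def using fold_canon_step_mono[of "(E, {0..<t})"] by simp

lemma canon_add_subset:
  "canon_add C t E \<subseteq> E \<union> {(s, t) |s. s < t \<and> \<not> commutes (C ! s) (C ! t)}"
  unfolding canon_add_def using fold_canon_step_subset[of C t _ "(E, {0..<t})"] by fastforce

lemma canon_add_reaches:
  "s < t \<Longrightarrow> \<not> commutes (C ! s) (C ! t) \<Longrightarrow> (s, t) \<in> (canon_add C t E)\<^sup>+"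
  unfolding canon_add_def by (rule fold_canon_step_reaches) auto

lemma canon_prefix_subset:
  "t \<le> length C \<Longrightarrow> fold (canon_add C) [0..<t] {} \<subseteq> dependency_edges C"
proof (induction t)
  case (Suc t)
  then show ?case
    using canon_add_subset[of C t "fold (canon_add C) [0..<t] {}"]
    by (auto simp: dependency_edges_def)
qed simp

lemma canon_prefix_reaches:
  "(x, y) \<in> dependency_edges C \<Longrightarrow> y < t \<Longrightarrow> (x, y) \<in> (fold (canon_add C) [0..<t] {})\<^sup>+"
proof (induction t)
  case (Suc t)
  let ?E = "fold (canon_add C) [0..<t] {}"
  show ?case
  proof (cases "y < t")
    case True
    have "?E\<^sup>+ \<subseteq> (canon_add C t ?E)\<^sup>+"
      by (intro trancl_mono_subset canon_add_mono)
    then show ?thesis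
      using Suc.IH Suc.prems(1) True by auto
  next
    case False
    then have "y = t"
      using Suc.prems(2) by simp
    then show ?thesis
      using Suc.prems(1) canon_add_reaches[of x t C ?E] by (simp add: dependency_edges_def)
  qed
qed simp

lemma trancl_canon_edges: "(canon_edges C)\<^sup>+ = (dependency_edges C)\<^sup>+"
proof
  show "(canon_edges C)\<^sup>+ \<subseteq> (dependency_edges C)\<^sup>+"
    unfolding canon_edges_def by (intro trancl_mono_subset canon_prefix_subset) simp
  have "dependency_edges C \<subseteq> (canon_edges C)\<^sup>+"
  proof
    fix e assume "e \<in> dependency_edges C"
    moreover have "snd e < length C"
      using \<open>e \<in> dependency_edges C\<close> by (auto simp: dependency_edges_def)
    ultimately show "e \<in> (canon_edges C)\<^sup>+"
      unfolding canon_edges_def using canon_prefix_reaches by (metis prod.collapse)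
  qed
  then show "(dependency_edges C)\<^sup>+ \<subseteq> (canon_edges C)\<^sup>+"
    by (metis trancl_id trancl_mono_subset trans_trancl)
qed

definition precedes :: "nat list \<Rightarrow> nat \<Rightarrow> nat \<Rightarrow> bool" where
  "precedes p x y \<longleftrightarrow> (\<exists>a b. a < b \<and> b < length p \<and> p ! a = x \<and> p ! b = y)"

definition respects_dependencies :: "complex mat list \<Rightarrow> nat list \<Rightarrow> bool" where
  "respects_dependencies C p \<longleftrightarrow>
     distinct p \<and> (\<forall>(x, y) \<in> dependency_edges C. precedes p x y)"

lemma precedes_trans:
  "distinct p \<Longrightarrow> precedes p x y \<Longrightarrow> precedes p y z \<Longrightarrow> precedes p x z"
  unfolding precedes_def by (metis nth_eq_iff_index_eq order.strict_trans)

lemma precedes_asym: "distinct p \<Longrightarrow> precedes p x y \<Longrightarrow> \<not> precedes p y x"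
  unfolding precedes_def by (metis nth_eq_iff_index_eq order.strict_trans order.irrefl)

lemma precedes_append:
  assumes "x \<in> set xs" and "y \<in> set ys"
  shows "precedes (xs @ ys) x y"
proof -
  obtain a where "a < length xs" "xs ! a = x"
    using assms(1) by (auto simp: in_set_conv_nth)
  moreover obtain b where "b < length ys" "ys ! b = y"
    using assms(2) by (auto simp: in_set_conv_nth)
  ultimately show ?thesis
    unfolding precedes_def by (intro exI[of _ a] exI[of _ "length xs + b"]) (auto simp: nth_append)
qed

lemma respects_dependencies_upt: "respects_dependencies C [0..<length C]"
  unfolding respects_dependencies_def precedes_def dependency_edges_def
  by (auto intro!: exI)

lemma comm_move_respects_dependencies:
  assumes "comm_move C p q" and "respects_dependencies C p"
  shows "respects_dependencies C q"
proof -
  obtain k where k: "Suc k < length p" "commutes (C ! (p ! k)) (C ! (p ! Suc k))"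
    and q: "q = p[k := p ! Suc k, Suc k := p ! k]"
    using assms(1) by (auto simp: comm_move_def)
  define \<sigma> where "\<sigma> a = (if a = k then Suc k else if a = Suc k then k else a)" for a
  have q_\<sigma>: "q ! \<sigma> a = p ! a" if "a < length p" for a
    using k that by (auto simp: q \<sigma>_def nth_list_update)
  have "precedes q x y" if xy: "(x, y) \<in> dependency_edges C" for x y
  proof -
    obtain a b where ab: "a < b" "b < length p" "p ! a = x" "p ! b = y"
      using assms(2) xy by (auto simp: respects_dependencies_def precedes_def)
    have "\<not> (a = k \<and> b = Suc k)"
      using xy k ab by (auto simp: dependency_edges_def)
    then have "\<sigma> a < \<sigma> b" and "\<sigma> b < length q"
      using ab k by (auto simp: \<sigma>_def q)
    then show ?thesis
      unfolding precedes_def using q_\<sigma> ab by (metis order.strict_trans)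
  qed
  moreover have "distinct q"
    using assms(2) k by (simp add: q respects_dependencies_def distinct_swap)
  ultimately show ?thesis
    by (auto simp: respects_dependencies_def)
qed

lemma comm_moves_respects_dependencies:
  "(comm_move C)\<^sup>*\<^sup>* p q \<Longrightarrow> respects_dependencies C p \<Longrightarrow> respects_dependencies C q"
  by (induction rule: rtranclp_induct) (auto intro: comm_move_respects_dependencies)

lemma respects_dependencies_trancl:
  assumes "respects_dependencies C p" and "(x, y) \<in> (dependency_edges C)\<^sup>+"
  shows "precedes p x y"
  using assms(2)
  by (induction rule: trancl_induct)
     (use assms(1) precedes_trans in \<open>auto simp: respects_dependencies_def\<close>)

lemma comm_moves_precedes_not_dependent:
  assumes "(comm_move C)\<^sup>*\<^sup>* [0..<length C] p" and "precedes p j i"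
  shows "(i, j) \<notin> (dependency_edges C)\<^sup>+"
proof
  assume "(i, j) \<in> (dependency_edges C)\<^sup>+"
  moreover have p: "respects_dependencies C p"
    using comm_moves_respects_dependencies[OF assms(1) respects_dependencies_upt] .
  ultimately have "precedes p i j"
    by (rule respects_dependencies_trancl[rotated])
  with assms(2) p show False
    using precedes_asym by (auto simp: respects_dependencies_def)
qed

lemma upt_split: "a \<le> b \<Longrightarrow> b \<le> c \<Longrightarrow> [a..<c] = [a..<b] @ [b..<c]"
  using upt_add_eq_append[of a b "c - b"] by simp

lemma comm_move_swap:
  "commutes (C ! x) (C ! y) \<Longrightarrow> comm_move C (u @ x # y # v) (u @ y # x # v)"
  unfolding comm_move_def
  by (rule exI[of _ "length u"]) (auto simp: nth_append list_update_append)

lemma comm_moves_shift_left: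
  "\<forall>z \<in> set w. commutes (C ! z) (C ! y) \<Longrightarrow> (comm_move C)\<^sup>*\<^sup>* (u @ w @ y # v) (u @ y # w @ v)"
proof (induction w arbitrary: v rule: rev_induct)
  case (snoc z w)
  have "comm_move C ((u @ w) @ z # y # v) ((u @ w) @ y # z # v)"
    using snoc.prems by (intro comm_move_swap) auto
  then show ?case
    using snoc.IH[of "z # v"] snoc.prems by (auto intro: converse_rtranclp_into_rtranclp)
qed simp

lemma comm_moves_partition:
  assumes "sorted_wrt (\<lambda>a b. a \<in> A \<and> b \<notin> A \<longrightarrow> commutes (C ! a) (C ! b)) L"
  shows "(comm_move C)\<^sup>*\<^sup>* (u @ L @ v) (u @ filter (\<lambda>x. x \<notin> A) L @ filter (\<lambda>x. x \<in> A) L @ v)"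
  using assms
proof (induction L arbitrary: v rule: rev_induct)
  case (snoc y L)
  have IH: "(comm_move C)\<^sup>*\<^sup>* (u @ L @ y # v)
      (u @ filter (\<lambda>x. x \<notin> A) L @ filter (\<lambda>x. x \<in> A) L @ y # v)"
    using snoc.IH[of "y # v"] snoc.prems by (simp add: sorted_wrt_append)
  show ?case
  proof (cases "y \<in> A")
    case True
    then show ?thesis using IH by simp
  next
    case False
    have "\<forall>z \<in> set (filter (\<lambda>x. x \<in> A) L). commutes (C ! z) (C ! y)"
      using snoc.prems False by (auto simp: sorted_wrt_append)
    from comm_moves_shift_left[OF this, of "u @ filter (\<lambda>x. x \<notin> A) L"]
    show ?thesis
      using IH False by (auto elim: rtranclp_trans)
  qed
qed simp

lemma not_dependent_comm_moves_precedes: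
  assumes "(i, j) \<notin> (dependency_edges C)\<^sup>+" and "i < j" and "j < length C"
  shows "\<exists>p. (comm_move C)\<^sup>*\<^sup>* [0..<length C] p \<and> precedes p j i"
proof -
  define A where "A = {k. (i, k) \<in> (dependency_edges C)\<^sup>*}"
  define L where "L = [i..<Suc j]"
  have split: "[0..<length C] = [0..<i] @ L @ [Suc j..<length C]"
    using assms(2,3) upt_split[of 0 i "length C"] upt_split[of i "Suc j" "length C"]
    by (simp add: L_def)
  have "a \<in> A \<and> b \<notin> A \<longrightarrow> commutes (C ! a) (C ! b)" if "a < b" "b < length C" for a b
  proof (intro impI)
    assume "a \<in> A \<and> b \<notin> A"
    then have "(a, b) \<notin> dependency_edges C"
      unfolding A_def by (meson mem_Collect_eq rtrancl.rtrancl_into_rtrancl)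
    then show "commutes (C ! a) (C ! b)"
      using that by (simp add: dependency_edges_def)
  qed
  then have "sorted_wrt (\<lambda>a b. a \<in> A \<and> b \<notin> A \<longrightarrow> commutes (C ! a) (C ! b)) L"
    unfolding L_def
    by (rule sorted_wrt_mono_rel[OF _ sorted_wrt_upt]) (use assms(3) in auto)
  from comm_moves_partition[OF this, of "[0..<i]" "[Suc j..<length C]"]
  have "(comm_move C)\<^sup>*\<^sup>* [0..<length C]
      (([0..<i] @ filter (\<lambda>x. x \<notin> A) L) @ filter (\<lambda>x. x \<in> A) L @ [Suc j..<length C])"
    by (simp add: split)
  moreover have "j \<notin> A" and "i \<in> A"
    using assms(1,2) by (auto simp: A_def rtrancl_eq_or_trancl)
  then have "precedes (([0..<i] @ filter (\<lambda>x. x \<notin> A) L) @ filter (\<lambda>x. x \<in> A) L @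
      [Suc j..<length C]) j i"
    using assms(2) by (intro precedes_append) (auto simp: L_def)
  ultimately show ?thesis by blast
qed

theorem mainTheorem2:
  fixes n :: nat and C :: "complex mat list" and i j :: nat
  assumes "is_circuit n C"
    and "i < j" and "j < length C"
  shows "comm_zero C i j \<longleftrightarrow> (i, j) \<notin> (canon_edges C)\<^sup>+"
proof -
  have "comm_zero C i j \<longleftrightarrow> (\<exists>p. (comm_move C)\<^sup>*\<^sup>* [0..<length C] p \<and> precedes p j i)"
    using assms(2) unfolding comm_zero_def precedes_def by simp
  also have "\<dots> \<longleftrightarrow> (i, j) \<notin> (dependency_edges C)\<^sup>+"
    using comm_moves_precedes_not_dependent not_dependent_comm_moves_precedes assms(2,3)
    by blast
  finally show ?thesis
    by (simp add: trancl_canon_edges)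
qed

end
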